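(* Let $\mathbb{T}$ be a time scale, $\alpha\in]0,1]$, and let $f:\mathbb{T}\to\mathbb{R}$ be both delta and nabla fractional differentiable of order $\alpha$. Then $f$ is symmetric fractional differentiable of order $\alpha$ and, for each $t\in\mathbb{T}_\kappa^\kappa$, $$f^{\diamondsuit^\alpha}(t)=\gamma_1(t)f^{\Delta^\alpha}(t)+\gamma_2(t)f^{\nabla^\alpha}(t),$$ where $$\gamma_1(t):=\lim_{s\to t}\left[\frac{\sigma(t)-s}{\sigma(t)+2t-2s-\rho(t)}\right]^\alpha,\qquad \gamma_2(t):=\lim_{s\to t}\left[\frac{(2t-s)-\rho(t)}{\sigma(t)+2t-2s-\rho(t)}\right]^\alpha.$$
   Context: A time scale $\mathbb{T}$ is a nonempty closed subset of $\mathbb{R}$. $\sigma(t)=\inf\{s\in\mathbb{T}:s>t\}$ ($\inf\emptyset=\sup\mathbb{T}$), $\rho(t)=\sup\{s\in\mathbb{T}:s<t\}$ ($\sup\emptyset=\inf\mathbb{T}$); $f^\sigma=f\circ\sigma$, $f^\rho=f\circ\rho$. $\mathbb{T}^\kappa=\mathbb{T}\setminus\{\sup\mathbb{T}\}$ if $\sup\mathbb{T}$ is finite and left-scattered, else $\mathbb{T}$; $\mathbb{T}_\kappa=\mathbb{T}\setminus\{\inf\mathbb{T}\}$ if $\inf\mathbb{T}$ is finite and right-scattered, else $\mathbb{T}$; $\mathbb{T}_\kappa^\kappa=\mathbb{T}_\kappa\cap\mathbb{T}^\kappa$. Let $A=\,]0,1]\cap\{1/q: q\text{ odd positive integer}\}$,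 with $x^{1/q}$ the real $q$-th root. Nabla fractional derivative of order $\alpha$ at $t\in\mathbb{T}_\kappa$: the number $f^{\nabla^\alpha}(t)$ (if it exists) such that for every $\varepsilon>0$ there is $\delta>0$ with $\big|[f(s)-f^\rho(t)]-f^{\nabla^\alpha}(t)[s-\rho(t)]^\alpha\big|\le\varepsilon|s-\rho(t)|^\alpha$ for all $s\in\,]t-\delta,t+\delta[\,\cap\mathbb{T}$ if $\alpha\in A$, resp. all $s\in[t,t+\delta[\,\cap\mathbb{T}$ if $\alpha\notin A$. Delta fractional derivative of order $\alpha$ at $t\in\mathbb{T}^\kappa$: the number $f^{\Delta^\alpha}(t)$ (if it exists) such that for every $\varepsilon>0$ there is $\delta>0$ with $\big|[f^\sigma(t)-f(s)]-f^{\Delta^\alpha}(t)[\sigma(t)-s]^\alpha\big|\le\varepsilon|\sigma(t)-s|^\alpha$ for all $s\in\,]t-\delta,t+\delta[\,\cap\mathbb{T}$ if $\alpha\in A$, resp. all $s\in\,]t-\delta,t]\cap\mathbb{T}$ if $\alpha\notin A$. Symmetric fractional derivative of order $\alpha$ at $t\in\mathbb{T}_\kappa^\kappa$: the number $f^{\diamondsuit^\alpha}(t)$ (if it exists) such that for every $\varepsilon>0$ there is a neighborhood $U\subset\mathbb{T}$ of $t$ with $\big|[f^\sigma(t)-f(s)+f(2t-s)-f^\rho(t)]-f^{\diamondsuit^\alpha}(t)[\sigma(t)+2t-2s-\rho(t)]^\alpha\big|\le\varepsilon|\sigma(t)+2t-2s-\rho(t)|^\alpha$ for all $s\in U$ with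 $2t-s\in U$. A function is (delta/nabla/symmetric) fractional differentiable of order $\alpha$ if the corresponding derivative exists at every point of its domain of definition ($\mathbb{T}^\kappa$, $\mathbb{T}_\kappa$, $\mathbb{T}_\kappa^\kappa$ respectively). Limits $s\to t$ are over $s\in\mathbb{T}$, $s\ne t$. *)

theory Defs
  imports "HOL-Analysis.Analysis"
begin

definition time_scale :: "real set \<Rightarrow> bool" where
  "time_scale T \<longleftrightarrow> T \<noteq> {} \<and> closed T"

definition ts_sigma :: "real set \<Rightarrow> real \<Rightarrow> real" where
  "ts_sigma T t = (if {s\<in>T. s > t} = {} then Sup T else Inf {s\<in>T. s > t})"

definition ts_rho :: "real set \<Rightarrow> real \<Rightarrow> real" where
  "ts_rho T t = (if {s\<in>T. s < t} = {} then Inf T else Sup {s\<in>T. s < t})"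

definition kappa_up :: "real set \<Rightarrow> real set" where
  "kappa_up T = (if bdd_above T \<and> ts_rho T (Sup T) < Sup T then T - {Sup T} else T)"

definition kappa_low :: "real set \<Rightarrow> real set" where
  "kappa_low T = (if bdd_below T \<and> ts_sigma T (Inf T) > Inf T then T - {Inf T} else T)"

definition kappa_both :: "real set \<Rightarrow> real set" where
  "kappa_both T = kappa_low T \<inter> kappa_up T"

definition frac_A :: "real set" where
  "frac_A = {a. 0 < a \<and> a \<le> 1 \<and> (\<exists>q::nat. odd q \<and> a = 1 / real q)}"

text \<open>x^alpha: odd (sign-preserving) extension of |x| powr alpha.  For alpha = 1/q with q odd
  this is exactly the real q-th root (lemma frpow_root below); for x \<ge> 0 it is the usual power.\<close>
definition frpow :: "real \<Rightarrow> real \<Rightarrow> real" where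
  "frpow \<alpha> x = sgn x * \<bar>x\<bar> powr \<alpha>"

lemma frpow_root:
  assumes "odd q"
  shows "frpow (1 / real q) x = root q x"
proof -
  have q: "q > 0" using assms by (cases q) auto
  consider "x > 0" | "x = 0" | "x < 0" by linarith
  then show ?thesis
  proof cases
    case 1 then show ?thesis using q by (simp add: frpow_def root_powr_inverse)
  next
    case 2 then show ?thesis by (simp add: frpow_def)
  next
    case 3
    have "root q x = - root q (-x)" using real_root_minus by simp
    also have "root q (-x) = (-x) powr (1 / real q)" using q 3 by (simp add: root_powr_inverse)
    finally show ?thesis using 3 by (simp add: frpow_def)
  qed
qed

definition has_nabla_frac_deriv ::
  "real set \<Rightarrow> real \<Rightarrow> (real \<Rightarrow> real) \<Rightarrow> real \<Rightarrow> real \<Rightarrow> bool" where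
  "has_nabla_frac_deriv T \<alpha> f t D \<longleftrightarrow>
     (\<forall>\<epsilon>>0. \<exists>\<delta>>0. \<forall>s\<in>T.
        (if \<alpha> \<in> frac_A then t - \<delta> < s \<and> s < t + \<delta> else t \<le> s \<and> s < t + \<delta>) \<longrightarrow>
        \<bar>(f s - f (ts_rho T t)) - D * frpow \<alpha> (s - ts_rho T t)\<bar>
          \<le> \<epsilon> * \<bar>s - ts_rho T t\<bar> powr \<alpha>)"

definition has_delta_frac_deriv ::
  "real set \<Rightarrow> real \<Rightarrow> (real \<Rightarrow> real) \<Rightarrow> real \<Rightarrow> real \<Rightarrow> bool" where
  "has_delta_frac_deriv T \<alpha> f t D \<longleftrightarrow>
     (\<forall>\<epsilon>>0. \<exists>\<delta>>0. \<forall>s\<in>T.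
        (if \<alpha> \<in> frac_A then t - \<delta> < s \<and> s < t + \<delta> else t - \<delta> < s \<and> s \<le> t) \<longrightarrow>
        \<bar>(f (ts_sigma T t) - f s) - D * frpow \<alpha> (ts_sigma T t - s)\<bar>
          \<le> \<epsilon> * \<bar>ts_sigma T t - s\<bar> powr \<alpha>)"

text \<open>Neighbourhood U of t in T = T \<inter> V with V open, t \<in> V.\<close>
definition has_sym_frac_deriv ::
  "real set \<Rightarrow> real \<Rightarrow> (real \<Rightarrow> real) \<Rightarrow> real \<Rightarrow> real \<Rightarrow> bool" where
  "has_sym_frac_deriv T \<alpha> f t D \<longleftrightarrow>
     (\<forall>\<epsilon>>0. \<exists>V. open V \<and> t \<in> V \<and> (\<forall>s\<in>T \<inter> V. 2 * t - s \<in> T \<inter> V \<longrightarrow>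
        \<bar>(f (ts_sigma T t) - f s + f (2 * t - s) - f (ts_rho T t))
           - D * frpow \<alpha> (ts_sigma T t + 2 * t - 2 * s - ts_rho T t)\<bar>
          \<le> \<epsilon> * \<bar>ts_sigma T t + 2 * t - 2 * s - ts_rho T t\<bar> powr \<alpha>))"

definition delta_frac_differentiable :: "real set \<Rightarrow> real \<Rightarrow> (real \<Rightarrow> real) \<Rightarrow> bool" where
  "delta_frac_differentiable T \<alpha> f \<longleftrightarrow> (\<forall>t\<in>kappa_up T. \<exists>D. has_delta_frac_deriv T \<alpha> f t D)"

definition nabla_frac_differentiable :: "real set \<Rightarrow> real \<Rightarrow> (real \<Rightarrow> real) \<Rightarrow> bool" where
  "nabla_frac_differentiable T \<alpha> f \<longleftrightarrow> (\<forall>t\<in>kappa_low T. \<exists>D. has_nabla_frac_deriv T \<alpha> f t D)"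

definition sym_frac_differentiable :: "real set \<Rightarrow> real \<Rightarrow> (real \<Rightarrow> real) \<Rightarrow> bool" where
  "sym_frac_differentiable T \<alpha> f \<longleftrightarrow> (\<forall>t\<in>kappa_both T. \<exists>D. has_sym_frac_deriv T \<alpha> f t D)"

text \<open>Limit s \<rightarrow> t over s \<in> T, s \<noteq> t.  If t is an isolated point of T this limit is vacuous;
  there we use the value of the expression at s = t.\<close>
definition ts_lim :: "real set \<Rightarrow> (real \<Rightarrow> real) \<Rightarrow> real \<Rightarrow> real" where
  "ts_lim T g t = (if t islimpt T then Lim (at t within T) g else g t)"

definition gamma1 :: "real set \<Rightarrow> real \<Rightarrow> real \<Rightarrow> real" where
  "gamma1 T \<alpha> t = ts_lim T (\<lambda>s. frpow \<alpha>
     ((ts_sigma T t - s) / (ts_sigma T t + 2 * t - 2 * s - ts_rho T t))) t"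

definition gamma2 :: "real set \<Rightarrow> real \<Rightarrow> real \<Rightarrow> real" where
  "gamma2 T \<alpha> t = ts_lim T (\<lambda>s. frpow \<alpha>
     (((2 * t - s) - ts_rho T t) / (ts_sigma T t + 2 * t - 2 * s - ts_rho T t))) t"

end

theory Submission
  imports Defs
begin

text \<open>At a point where \<open>T\<close> is scattered on at least one side, the only symmetric pair
  \<open>s, 2t - s\<close> in \<open>T\<close> near \<open>t\<close> is \<open>s = t\<close>, so the symmetric quotient reduces to
  \<open>f \<sigma> - f \<rho>\<close>, which splits into the two one-sided jumps
  \<open>f \<sigma> - f t = f\<^sup>\<Delta>(t) (\<sigma> - t)\<^sup>\<alpha>\<close> and \<open>f t - f \<rho> = f\<^sup>\<nabla>(t) (t - \<rho>)\<^sup>\<alpha>\<close>; here the weights are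
  \<open>\<gamma>\<^sub>1 = ((\<sigma> - t)/(\<sigma> - \<rho>))\<^sup>\<alpha>\<close> and \<open>\<gamma>\<^sub>2 = ((t - \<rho>)/(\<sigma> - \<rho>))\<^sup>\<alpha>\<close>.
  At a point dense on both sides \<open>\<gamma>\<^sub>1 = \<gamma>\<^sub>2 = 2\<^sup>-\<^sup>\<alpha>\<close>, and for \<open>s \<le> t\<close> the symmetric quotient
  is the sum of the delta quotient at \<open>s\<close> and the nabla quotient at \<open>2t - s\<close>; the case
  \<open>s > t\<close> follows by the reflection \<open>s \<mapsto> 2t - s\<close>, under which the quotient is odd.\<close>

lemma frpow_nonneg: "x \<ge> 0 \<Longrightarrow> frpow a x = x powr a"
  by (cases "x = 0") (auto simp: frpow_def)

lemma frpow_minus: "frpow a (- x) = - frpow a x"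
  by (simp add: frpow_def sgn_minus)

lemma frpow_mult_pos: "c > 0 \<Longrightarrow> frpow a (c * x) = c powr a * frpow a x"
  by (simp add: frpow_def sgn_mult abs_mult powr_mult)

lemma tendsto_frpow_zero:
  assumes "(g \<longlongrightarrow> 0) F" "a > 0"
  shows "((\<lambda>x. frpow a (g x)) \<longlongrightarrow> 0) F"
proof -
  have "((\<lambda>x. \<bar>g x\<bar> powr a) \<longlongrightarrow> 0) F"
    by (rule tendsto_zero_powrI[OF tendsto_rabs_zero[OF assms(1)] tendsto_const]) (use assms(2) in auto)
  moreover have "\<bar>frpow a (g x)\<bar> = \<bar>g x\<bar> powr a" for x
    by (auto simp: frpow_def abs_mult sgn_if)
  ultimately have "((\<lambda>x. \<bar>frpow a (g x)\<bar>) \<longlongrightarrow> 0) F" by simp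
  then show ?thesis by (rule tendsto_rabs_zero_cancel)
qed

lemma tendsto_frpow_nonneg:
  assumes "(g \<longlongrightarrow> c) F" "c \<ge> 0" "a > 0"
  shows "((\<lambda>x. frpow a (g x)) \<longlongrightarrow> frpow a c) F"
proof (cases "c = 0")
  case True
  then show ?thesis using tendsto_frpow_zero assms by (simp add: frpow_def)
next
  case False
  then have "\<forall>\<^sub>F x in F. g x > 0"
    using order_tendstoD(1)[OF assms(1), of 0] assms(2) by simp
  then have "\<forall>\<^sub>F x in F. frpow a (g x) = g x powr a"
    by (auto elim: eventually_mono simp: frpow_nonneg)
  moreover have "((\<lambda>x. g x powr a) \<longlongrightarrow> c powr a) F"
    using assms False by (intro tendsto_intros) auto
  ultimately show ?thesis
    using assms(2) by (simp add: tendsto_cong frpow_nonneg)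
qed

lemma eq_0_if_abs_le_all_mult:
  fixes x c :: real
  assumes "\<And>\<epsilon>. \<epsilon> > 0 \<Longrightarrow> \<bar>x\<bar> \<le> \<epsilon> * c"
  shows "x = 0"
proof -
  have "c \<ge> 0" using assms[of 1] by linarith
  have "\<bar>x\<bar> \<le> e" if "e > 0" for e
  proof -
    have "e / (c + 1) > 0" using that \<open>c \<ge> 0\<close> by simp
    then have "\<bar>x\<bar> \<le> e / (c + 1) * c" by (rule assms)
    also have "\<dots> \<le> e" using that \<open>c \<ge> 0\<close> by (simp add: divide_le_eq mult_left_mono)
    finally show ?thesis .
  qed
  then show ?thesis by (metis abs_le_zero_iff dense not_le)
qed

lemma ts_sigma_ge: "t \<in> T \<Longrightarrow> t \<le> ts_sigma T t"
proof (cases "{s\<in>T. s > t} = {}")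
  case True
  assume "t \<in> T"
  with True have "Sup T = t" by (intro cSup_eq_maximum) (auto simp: not_less)
  then show ?thesis using True by (simp add: ts_sigma_def)
qed (auto simp: ts_sigma_def intro!: cInf_greatest)

lemma ts_sigma_le: "s \<in> T \<Longrightarrow> t < s \<Longrightarrow> ts_sigma T t \<le> s"
  unfolding ts_sigma_def by (auto intro!: cInf_lower bdd_belowI[where m = t])

lemma ts_rho_le: "t \<in> T \<Longrightarrow> ts_rho T t \<le> t"
proof (cases "{s\<in>T. s < t} = {}")
  case True
  assume "t \<in> T"
  with True have "Inf T = t" by (intro cInf_eq_minimum) (auto simp: not_less)
  then show ?thesis using True by (simp add: ts_rho_def)
qed (auto simp: ts_rho_def intro!: cSup_least)

lemma ts_rho_ge: "s \<in> T \<Longrightarrow> s < t \<Longrightarrow> s \<le> ts_rho T t"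
  unfolding ts_rho_def by (auto intro!: cSup_upper bdd_aboveI[where M = t])

lemma ts_lim_eq_at:
  assumes "(g \<longlongrightarrow> g t) (at t within T)"
  shows "ts_lim T g t = g t"
  using assms unfolding ts_lim_def by (auto intro!: tendsto_Lim simp: trivial_limit_within)

lemma ts_lim_const:
  assumes "t islimpt T" "\<And>s. s \<noteq> t \<Longrightarrow> g s = c"
  shows "ts_lim T g t = c"
proof -
  have "\<forall>\<^sub>F s in at t within T. g s = c"
    unfolding eventually_at_filter using assms(2) by (auto intro!: always_eventually)
  then have "(g \<longlongrightarrow> c) (at t within T)" by (simp add: tendsto_eventually)
  then show ?thesis using assms(1) unfolding ts_lim_def
    by (auto intro!: tendsto_Lim simp: trivial_limit_within)
qed

lemma has_delta_frac_deriv_left: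
  assumes "has_delta_frac_deriv T \<alpha> f t D" "\<epsilon> > 0"
  obtains \<delta> where "\<delta> > 0" "\<And>s. s \<in> T \<Longrightarrow> t - \<delta> < s \<Longrightarrow> s \<le> t \<Longrightarrow>
    \<bar>(f (ts_sigma T t) - f s) - D * frpow \<alpha> (ts_sigma T t - s)\<bar> \<le> \<epsilon> * \<bar>ts_sigma T t - s\<bar> powr \<alpha>"
proof -
  obtain \<delta> where "\<delta> > 0" and "\<forall>s\<in>T.
      (if \<alpha> \<in> frac_A then t - \<delta> < s \<and> s < t + \<delta> else t - \<delta> < s \<and> s \<le> t) \<longrightarrow>
      \<bar>(f (ts_sigma T t) - f s) - D * frpow \<alpha> (ts_sigma T t - s)\<bar> \<le> \<epsilon> * \<bar>ts_sigma T t - s\<bar> powr \<alpha>"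
    using assms unfolding has_delta_frac_deriv_def by blast
  then show ?thesis by (intro that[of \<delta>]) auto
qed

lemma has_nabla_frac_deriv_right:
  assumes "has_nabla_frac_deriv T \<alpha> f t D" "\<epsilon> > 0"
  obtains \<delta> where "\<delta> > 0" "\<And>s. s \<in> T \<Longrightarrow> t \<le> s \<Longrightarrow> s < t + \<delta> \<Longrightarrow>
    \<bar>(f s - f (ts_rho T t)) - D * frpow \<alpha> (s - ts_rho T t)\<bar> \<le> \<epsilon> * \<bar>s - ts_rho T t\<bar> powr \<alpha>"
proof -
  obtain \<delta> where "\<delta> > 0" and "\<forall>s\<in>T.
      (if \<alpha> \<in> frac_A then t - \<delta> < s \<and> s < t + \<delta> else t \<le> s \<and> s < t + \<delta>) \<longrightarrow>
      \<bar>(f s - f (ts_rho T t)) - D * frpow \<alpha> (s - ts_rho T t)\<bar> \<le> \<epsilon> * \<bar>s - ts_rho T t\<bar> powr \<alpha>"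
    using assms unfolding has_nabla_frac_deriv_def by blast
  then show ?thesis by (intro that[of \<delta>]) auto
qed

lemma has_delta_frac_deriv_jump:
  assumes "t \<in> T" "has_delta_frac_deriv T \<alpha> f t D"
  shows "f (ts_sigma T t) - f t = D * frpow \<alpha> (ts_sigma T t - t)"
proof -
  have "\<bar>(f (ts_sigma T t) - f t) - D * frpow \<alpha> (ts_sigma T t - t)\<bar>
      \<le> \<epsilon> * \<bar>ts_sigma T t - t\<bar> powr \<alpha>" if \<epsilon>: "\<epsilon> > 0" for \<epsilon>
  proof -
    obtain \<delta> where "\<delta> > 0" and "\<And>s. s \<in> T \<Longrightarrow> t - \<delta> < s \<Longrightarrow> s \<le> t \<Longrightarrow>
        \<bar>(f (ts_sigma T t) - f s) - D * frpow \<alpha> (ts_sigma T t - s)\<bar> \<le> \<epsilon> * \<bar>ts_sigma T t - s\<bar> powr \<alpha>"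
      using has_delta_frac_deriv_left[OF assms(2) \<epsilon>] by blast
    from this(2)[OF assms(1)] \<open>\<delta> > 0\<close> show ?thesis by simp
  qed
  from eq_0_if_abs_le_all_mult[OF this] show ?thesis by linarith
qed

lemma has_nabla_frac_deriv_jump:
  assumes "t \<in> T" "has_nabla_frac_deriv T \<alpha> f t D"
  shows "f t - f (ts_rho T t) = D * frpow \<alpha> (t - ts_rho T t)"
proof -
  have "\<bar>(f t - f (ts_rho T t)) - D * frpow \<alpha> (t - ts_rho T t)\<bar>
      \<le> \<epsilon> * \<bar>t - ts_rho T t\<bar> powr \<alpha>" if \<epsilon>: "\<epsilon> > 0" for \<epsilon>
  proof -
    obtain \<delta> where "\<delta> > 0" and "\<And>s. s \<in> T \<Longrightarrow> t \<le> s \<Longrightarrow> s < t + \<delta> \<Longrightarrow>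
        \<bar>(f s - f (ts_rho T t)) - D * frpow \<alpha> (s - ts_rho T t)\<bar> \<le> \<epsilon> * \<bar>s - ts_rho T t\<bar> powr \<alpha>"
      using has_nabla_frac_deriv_right[OF assms(2) \<epsilon>] by blast
    from this(2)[OF assms(1)] \<open>\<delta> > 0\<close> show ?thesis by simp
  qed
  from eq_0_if_abs_le_all_mult[OF this] show ?thesis by linarith
qed

lemma has_sym_frac_deriv_ballI:
  assumes "\<And>\<epsilon>. \<epsilon> > 0 \<Longrightarrow> \<exists>r>0. \<forall>s\<in>T. 2 * t - s \<in> T \<longrightarrow> \<bar>s - t\<bar> < r \<longrightarrow>
    \<bar>(f (ts_sigma T t) - f s + f (2 * t - s) - f (ts_rho T t))
       - D * frpow \<alpha> (ts_sigma T t + 2 * t - 2 * s - ts_rho T t)\<bar>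
      \<le> \<epsilon> * \<bar>ts_sigma T t + 2 * t - 2 * s - ts_rho T t\<bar> powr \<alpha>"
  shows "has_sym_frac_deriv T \<alpha> f t D"
  unfolding has_sym_frac_deriv_def
proof (intro allI impI)
  fix \<epsilon> :: real assume "\<epsilon> > 0"
  then obtain r where "r > 0" and r: "\<forall>s\<in>T. 2 * t - s \<in> T \<longrightarrow> \<bar>s - t\<bar> < r \<longrightarrow>
    \<bar>(f (ts_sigma T t) - f s + f (2 * t - s) - f (ts_rho T t))
       - D * frpow \<alpha> (ts_sigma T t + 2 * t - 2 * s - ts_rho T t)\<bar>
      \<le> \<epsilon> * \<bar>ts_sigma T t + 2 * t - 2 * s - ts_rho T t\<bar> powr \<alpha>"
    using assms by blast
  show "\<exists>V. open V \<and> t \<in> V \<and> (\<forall>s\<in>T \<inter> V. 2 * t - s \<in> T \<inter> V \<longrightarrow>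
    \<bar>(f (ts_sigma T t) - f s + f (2 * t - s) - f (ts_rho T t))
       - D * frpow \<alpha> (ts_sigma T t + 2 * t - 2 * s - ts_rho T t)\<bar>
      \<le> \<epsilon> * \<bar>ts_sigma T t + 2 * t - 2 * s - ts_rho T t\<bar> powr \<alpha>)"
    using \<open>r > 0\<close> r by (intro exI[of _ "ball t r"]) (auto simp: dist_real_def abs_minus_commute)
qed

lemma sym_pair_dist_ge:
  assumes "s \<in> T" "2 * t - s \<in> T" "s \<noteq> t"
  shows "max (ts_sigma T t - t) (t - ts_rho T t) \<le> \<bar>s - t\<bar>"
proof -
  have *: "max (ts_sigma T t - t) (t - ts_rho T t) \<le> u - t" if "u \<in> T" "2 * t - u \<in> T" "t < u" for u
    using ts_sigma_le[of u T t] ts_rho_ge[of "2 * t - u" T t] that by simp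
  show ?thesis
  proof (cases "t < s")
    case True
    then show ?thesis using *[of s] assms by simp
  next
    case False
    then show ?thesis using *[of "2 * t - s"] assms by simp
  qed
qed

lemma has_sym_frac_deriv_centre_only:
  assumes "r > 0" "\<And>s. s \<in> T \<Longrightarrow> 2 * t - s \<in> T \<Longrightarrow> \<bar>s - t\<bar> < r \<Longrightarrow> s = t"
    and "D * frpow \<alpha> (ts_sigma T t - ts_rho T t) = f (ts_sigma T t) - f (ts_rho T t)"
  shows "has_sym_frac_deriv T \<alpha> f t D"
proof (rule has_sym_frac_deriv_ballI)
  fix \<epsilon> :: real assume "\<epsilon> > 0"
  then show "\<exists>r>0. \<forall>s\<in>T. 2 * t - s \<in> T \<longrightarrow> \<bar>s - t\<bar> < r \<longrightarrow>
    \<bar>(f (ts_sigma T t) - f s + f (2 * t - s) - f (ts_rho T t))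
       - D * frpow \<alpha> (ts_sigma T t + 2 * t - 2 * s - ts_rho T t)\<bar>
      \<le> \<epsilon> * \<bar>ts_sigma T t + 2 * t - 2 * s - ts_rho T t\<bar> powr \<alpha>"
  proof (intro exI[of _ r] conjI ballI impI)
    fix s assume "s \<in> T" "2 * t - s \<in> T" "\<bar>s - t\<bar> < r"
    then have "s = t" using assms(2) by blast
    then show "\<bar>(f (ts_sigma T t) - f s + f (2 * t - s) - f (ts_rho T t))
       - D * frpow \<alpha> (ts_sigma T t + 2 * t - 2 * s - ts_rho T t)\<bar>
      \<le> \<epsilon> * \<bar>ts_sigma T t + 2 * t - 2 * s - ts_rho T t\<bar> powr \<alpha>"
      using assms(3) \<open>\<epsilon> > 0\<close> by simp
  qed (rule assms(1))
qed

lemma gamma_scattered: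
  assumes "t \<in> T" "ts_rho T t < ts_sigma T t" "\<alpha> > 0"
  shows "gamma1 T \<alpha> t = ((ts_sigma T t - t) / (ts_sigma T t - ts_rho T t)) powr \<alpha>"
    and "gamma2 T \<alpha> t = ((t - ts_rho T t) / (ts_sigma T t - ts_rho T t)) powr \<alpha>"
proof -
  define \<sigma> \<rho> where "\<sigma> = ts_sigma T t" and "\<rho> = ts_rho T t"
  have "\<rho> \<le> t" "t \<le> \<sigma>" "\<rho> < \<sigma>"
    using assms ts_sigma_ge ts_rho_le by (auto simp: \<sigma>_def \<rho>_def)
  have "((\<lambda>s. frpow \<alpha> ((\<sigma> - s) / (\<sigma> + 2 * t - 2 * s - \<rho>)))
      \<longlongrightarrow> frpow \<alpha> ((\<sigma> - t) / (\<sigma> + 2 * t - 2 * t - \<rho>))) (at t within T)"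
    using \<open>t \<le> \<sigma>\<close> \<open>\<rho> < \<sigma>\<close> assms(3) by (intro tendsto_frpow_nonneg tendsto_intros) auto
  from ts_lim_eq_at[OF this] show "gamma1 T \<alpha> t = ((\<sigma> - t) / (\<sigma> - \<rho>)) powr \<alpha>"
    using \<open>t \<le> \<sigma>\<close> \<open>\<rho> < \<sigma>\<close> by (simp add: gamma1_def \<sigma>_def \<rho>_def frpow_nonneg)
  have "((\<lambda>s. frpow \<alpha> (((2 * t - s) - \<rho>) / (\<sigma> + 2 * t - 2 * s - \<rho>)))
      \<longlongrightarrow> frpow \<alpha> (((2 * t - t) - \<rho>) / (\<sigma> + 2 * t - 2 * t - \<rho>))) (at t within T)"
    using \<open>\<rho> \<le> t\<close> \<open>\<rho> < \<sigma>\<close> assms(3) by (intro tendsto_frpow_nonneg tendsto_intros) auto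
  from ts_lim_eq_at[OF this] show "gamma2 T \<alpha> t = ((t - \<rho>) / (\<sigma> - \<rho>)) powr \<alpha>"
    using \<open>\<rho> \<le> t\<close> \<open>\<rho> < \<sigma>\<close> by (simp add: gamma2_def \<sigma>_def \<rho>_def frpow_nonneg)
qed

lemma gamma_dense:
  assumes "ts_sigma T t = t" "ts_rho T t = t" "t islimpt T"
  shows "gamma1 T \<alpha> t = (1/2) powr \<alpha>" and "gamma2 T \<alpha> t = (1/2) powr \<alpha>"
proof -
  have half: "frpow \<alpha> ((t - s) / (2 * t - 2 * s)) = (1/2) powr \<alpha>" if "t \<noteq> s" for s
  proof -
    have "(t - s) / (2 * t - 2 * s) = 1/2" using that by (simp add: field_simps)
    then show ?thesis by (simp only:) (simp add: frpow_nonneg)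
  qed
  then show "gamma1 T \<alpha> t = (1/2) powr \<alpha>" "gamma2 T \<alpha> t = (1/2) powr \<alpha>"
    unfolding gamma1_def gamma2_def assms(1,2) by (auto intro!: ts_lim_const[OF assms(3)] half)
qed

lemma has_sym_frac_deriv_dense:
  assumes \<sigma>: "ts_sigma T t = t" and \<rho>: "ts_rho T t = t" and "\<alpha> > 0"
    and Dd: "has_delta_frac_deriv T \<alpha> f t Dd" and Dn: "has_nabla_frac_deriv T \<alpha> f t Dn"
  shows "has_sym_frac_deriv T \<alpha> f t ((1/2) powr \<alpha> * (Dd + Dn))"
proof (rule has_sym_frac_deriv_ballI)
  fix \<epsilon> :: real assume "\<epsilon> > 0"
  define err where "err s = (f t - f s + f (2 * t - s) - f t)
    - (1/2) powr \<alpha> * (Dd + Dn) * frpow \<alpha> (2 * (t - s))" for s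
  obtain \<delta>1 where "\<delta>1 > 0" and left: "\<And>s. s \<in> T \<Longrightarrow> t - \<delta>1 < s \<Longrightarrow> s \<le> t \<Longrightarrow>
      \<bar>(f t - f s) - Dd * frpow \<alpha> (t - s)\<bar> \<le> \<epsilon>/2 * \<bar>t - s\<bar> powr \<alpha>"
    using has_delta_frac_deriv_left[OF Dd, of "\<epsilon>/2"] \<open>\<epsilon> > 0\<close> \<sigma> by auto
  obtain \<delta>2 where "\<delta>2 > 0" and right: "\<And>s. s \<in> T \<Longrightarrow> t \<le> s \<Longrightarrow> s < t + \<delta>2 \<Longrightarrow>
      \<bar>(f s - f t) - Dn * frpow \<alpha> (s - t)\<bar> \<le> \<epsilon>/2 * \<bar>s - t\<bar> powr \<alpha>"
    using has_nabla_frac_deriv_right[OF Dn, of "\<epsilon>/2"] \<open>\<epsilon> > 0\<close> \<rho> by auto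
  have err_le: "\<bar>err s\<bar> \<le> \<epsilon> * \<bar>2 * (t - s)\<bar> powr \<alpha>"
    if s: "s \<in> T" "2 * t - s \<in> T" "t - min \<delta>1 \<delta>2 < s" "s \<le> t" for s
  proof -
    have "(1/2) powr \<alpha> * frpow \<alpha> (2 * (t - s)) = frpow \<alpha> (t - s)"
      by (subst frpow_mult_pos) (auto simp: mult.assoc[symmetric] powr_mult[symmetric])
    then have "err s = ((f t - f s) - Dd * frpow \<alpha> (t - s))
        + ((f (2 * t - s) - f t) - Dn * frpow \<alpha> ((2 * t - s) - t))"
      unfolding err_def by (simp add: algebra_simps)
    also have "\<bar>\<dots>\<bar> \<le> \<epsilon>/2 * \<bar>t - s\<bar> powr \<alpha> + \<epsilon>/2 * \<bar>(2 * t - s) - t\<bar> powr \<alpha>"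
      using left[of s] right[of "2 * t - s"] s by (intro abs_triangle_ineq[THEN order_trans] add_mono) auto
    also have "\<dots> = 1 * (\<epsilon> * \<bar>t - s\<bar> powr \<alpha>)"
      by (simp add: abs_minus_commute)
    also have "\<dots> \<le> 2 powr \<alpha> * (\<epsilon> * \<bar>t - s\<bar> powr \<alpha>)"
      using \<open>\<epsilon> > 0\<close> \<open>\<alpha> > 0\<close> by (intro mult_right_mono ge_one_powr_ge_zero) auto
    also have "\<dots> = \<epsilon> * \<bar>2 * (t - s)\<bar> powr \<alpha>"
      unfolding abs_mult by (simp add: powr_mult)
    finally show ?thesis .
  qed
  have err_reflect: "err (2 * t - s) = - err s" for s
  proof -
    have "2 * (t - (2 * t - s)) = - (2 * (t - s))" by simp
    then show ?thesis unfolding err_def by (simp only: frpow_minus) simp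
  qed
  show "\<exists>r>0. \<forall>s\<in>T. 2 * t - s \<in> T \<longrightarrow> \<bar>s - t\<bar> < r \<longrightarrow>
    \<bar>(f (ts_sigma T t) - f s + f (2 * t - s) - f (ts_rho T t))
       - (1/2) powr \<alpha> * (Dd + Dn) * frpow \<alpha> (ts_sigma T t + 2 * t - 2 * s - ts_rho T t)\<bar>
      \<le> \<epsilon> * \<bar>ts_sigma T t + 2 * t - 2 * s - ts_rho T t\<bar> powr \<alpha>"
  proof (intro exI[of _ "min \<delta>1 \<delta>2"] conjI ballI impI)
    show "min \<delta>1 \<delta>2 > 0" using \<open>\<delta>1 > 0\<close> \<open>\<delta>2 > 0\<close> by simp
    fix s assume s: "s \<in> T" "2 * t - s \<in> T" "\<bar>s - t\<bar> < min \<delta>1 \<delta>2"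
    have "\<bar>err s\<bar> \<le> \<epsilon> * \<bar>2 * (t - s)\<bar> powr \<alpha>"
    proof (cases "s \<le> t")
      case True
      then show ?thesis using s by (intro err_le) auto
    next
      case False
      then have "\<bar>err (2 * t - s)\<bar> \<le> \<epsilon> * \<bar>2 * (t - (2 * t - s))\<bar> powr \<alpha>"
        using s by (intro err_le) auto
      then show ?thesis unfolding err_reflect by (simp add: abs_minus_commute)
    qed
    moreover have "t + 2 * t - 2 * s - t = 2 * (t - s)" by simp
    ultimately show "\<bar>(f (ts_sigma T t) - f s + f (2 * t - s) - f (ts_rho T t))
       - (1/2) powr \<alpha> * (Dd + Dn) * frpow \<alpha> (ts_sigma T t + 2 * t - 2 * s - ts_rho T t)\<bar>
      \<le> \<epsilon> * \<bar>ts_sigma T t + 2 * t - 2 * s - ts_rho T t\<bar> powr \<alpha>"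
      unfolding \<sigma> \<rho> err_def by (simp only: mult.assoc)
  qed
qed

lemma has_sym_frac_deriv_gamma:
  assumes "t \<in> T" "\<alpha> > 0"
    and Dd: "has_delta_frac_deriv T \<alpha> f t Dd" and Dn: "has_nabla_frac_deriv T \<alpha> f t Dn"
  shows "has_sym_frac_deriv T \<alpha> f t (gamma1 T \<alpha> t * Dd + gamma2 T \<alpha> t * Dn)"
proof -
  define \<sigma> \<rho> where "\<sigma> = ts_sigma T t" and "\<rho> = ts_rho T t"
  have "\<rho> \<le> t" "t \<le> \<sigma>"
    using assms(1) ts_sigma_ge ts_rho_le by (auto simp: \<sigma>_def \<rho>_def)
  consider (scattered) "\<rho> < \<sigma>" | (dense) "\<sigma> = t" "\<rho> = t" "t islimpt T"
    | (isolated) "\<sigma> = t" "\<rho> = t" "\<not> t islimpt T"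
    using \<open>\<rho> \<le> t\<close> \<open>t \<le> \<sigma>\<close> by linarith
  then show ?thesis
  proof cases
    case scattered
    note \<gamma> = gamma_scattered[OF assms(1) scattered[unfolded \<sigma>_def \<rho>_def] assms(2)]
    have "(gamma1 T \<alpha> t * Dd + gamma2 T \<alpha> t * Dn) * frpow \<alpha> (\<sigma> - \<rho>)
        = Dd * (\<sigma> - t) powr \<alpha> + Dn * (t - \<rho>) powr \<alpha>"
      using scattered \<open>\<rho> \<le> t\<close> \<open>t \<le> \<sigma>\<close> unfolding \<gamma> \<sigma>_def \<rho>_def
      by (simp add: frpow_nonneg powr_divide field_simps)
    also have "\<dots> = f \<sigma> - f \<rho>"
      using has_delta_frac_deriv_jump[OF assms(1) Dd] has_nabla_frac_deriv_jump[OF assms(1) Dn]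
        \<open>\<rho> \<le> t\<close> \<open>t \<le> \<sigma>\<close> by (simp add: \<sigma>_def \<rho>_def frpow_nonneg)
    finally have "(gamma1 T \<alpha> t * Dd + gamma2 T \<alpha> t * Dn) * frpow \<alpha> (\<sigma> - \<rho>) = f \<sigma> - f \<rho>" .
    moreover have "s = t" if "s \<in> T" "2 * t - s \<in> T" "\<bar>s - t\<bar> < max (\<sigma> - t) (t - \<rho>)" for s
      using sym_pair_dist_ge[OF that(1,2)] that(3) unfolding \<sigma>_def \<rho>_def by fastforce
    moreover have "max (\<sigma> - t) (t - \<rho>) > 0"
      using scattered by linarith
    ultimately show ?thesis
      unfolding \<sigma>_def \<rho>_def by (intro has_sym_frac_deriv_centre_only) (auto simp: mult.commute)
  next
    case dense
    then have "gamma1 T \<alpha> t * Dd + gamma2 T \<alpha> t * Dn = (1/2) powr \<alpha> * (Dd + Dn)"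
      unfolding \<sigma>_def \<rho>_def by (simp add: gamma_dense distrib_left)
    then show ?thesis
      using dense has_sym_frac_deriv_dense[OF _ _ assms(2) Dd Dn] by (simp add: \<sigma>_def \<rho>_def)
  next
    case isolated
    \<comment> \<open>This means \<open>T = {t}\<close>: the weights are junk values of \<open>ts_lim\<close>, but every \<open>D\<close> qualifies.\<close>
    then obtain r where "r > 0" and far: "\<And>s. s \<in> T \<Longrightarrow> s \<noteq> t \<Longrightarrow> r \<le> \<bar>s - t\<bar>"
      unfolding islimpt_approachable_real by (auto simp: not_less)
    have "s = t" if "s \<in> T" "\<bar>s - t\<bar> < r" for s
      using far[OF that(1)] that(2) by force
    then show ?thesis
      using \<open>r > 0\<close> isolated by (intro has_sym_frac_deriv_centre_only[of r]) (auto simp: \<sigma>_def \<rho>_def frpow_def)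
  qed
qed

theorem proposition3p29:
  fixes T :: "real set" and \<alpha> :: real and f :: "real \<Rightarrow> real"
  assumes "time_scale T"
    and "0 < \<alpha>" and "\<alpha> \<le> 1"
    and "delta_frac_differentiable T \<alpha> f"
    and "nabla_frac_differentiable T \<alpha> f"
  shows "sym_frac_differentiable T \<alpha> f \<and>
    (\<forall>t\<in>kappa_both T. \<forall>Ddelta Dnabla.
        has_delta_frac_deriv T \<alpha> f t Ddelta \<and> has_nabla_frac_deriv T \<alpha> f t Dnabla \<longrightarrow>
        has_sym_frac_deriv T \<alpha> f t (gamma1 T \<alpha> t * Ddelta + gamma2 T \<alpha> t * Dnabla))"
proof -
  have "kappa_both T \<subseteq> T"
    unfolding kappa_both_def kappa_low_def kappa_up_def by auto
  then have sym: "\<forall>t\<in>kappa_both T. \<forall>Ddelta Dnabla.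
      has_delta_frac_deriv T \<alpha> f t Ddelta \<and> has_nabla_frac_deriv T \<alpha> f t Dnabla \<longrightarrow>
      has_sym_frac_deriv T \<alpha> f t (gamma1 T \<alpha> t * Ddelta + gamma2 T \<alpha> t * Dnabla)"
    using has_sym_frac_deriv_gamma[OF _ assms(2)] by blast
  moreover have "sym_frac_differentiable T \<alpha> f"
    unfolding sym_frac_differentiable_def
  proof
    fix t assume t: "t \<in> kappa_both T"
    then obtain Dd Dn where "has_delta_frac_deriv T \<alpha> f t Dd" "has_nabla_frac_deriv T \<alpha> f t Dn"
      using assms(4,5) unfolding delta_frac_differentiable_def nabla_frac_differentiable_def kappa_both_def
      by blast
    with sym t show "\<exists>D. has_sym_frac_deriv T \<alpha> f t D" by blast
  qed
  ultimately show ?thesis by blast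
qed

end
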